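(* Let $p$ be a prime, $k\ge 1$, and $G=\mathbb{Z}_{p^k}$. Then: (i) there is a deterministic query algorithm that, for every finite set $X$ and every function $f:G\to X$ hiding a subgroup $H\le G$, makes exactly $2$ queries and correctly decides whether $H$ is trivial; (ii) there is a deterministic query algorithm that, for every finite set $X$ and every function $f:G\to X$ hiding a subgroup $H\le G$, outputs $H$ and makes at most $2+\log_p\frac{|G|}{|H|}$ queries, i.e. $O\!\left(1+\log\frac{|G|}{|H|}\right)$ queries.
   Context: Hidden subgroup problem ($\mathsf{HSP}$): $G$ is a finite group (known to the algorithm), $X$ a finite set, and $f:G\to X$ is an unknown function with the promise that there is a subgroup $H\le G$ such that for all $g_1,g_2\in G$, $f(g_1)=f(g_2)$ iff $g_1H=g_2H$; we say $f$ hides $H$. The identification version asks to output $H$; the decision version asks whether $H$ is the trivial group $\{e\}$. A deterministic query algorithm accesses $f$ only by adaptively choosing elements $g\in G$ and receiving $f(g)$ (a query); its query complexity on $f$ is the number of queries made. $\mathbb{Z}_{p^k}$ is the additive group of integers modulo $p^k$. *)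

theory Defs
  imports Complex_Main "HOL-Computational_Algebra.Primes" "HOL-Algebra.Coset"
begin

definition Zmod :: "nat \<Rightarrow> nat monoid" where
  "Zmod n = \<lparr>carrier = {0..<n}, mult = (\<lambda>a b. (a + b) mod n), one = 0\<rparr>"

definition hides :: "('g, 'm) monoid_scheme \<Rightarrow> ('g \<Rightarrow> 'x) \<Rightarrow> 'g set \<Rightarrow> bool" where
  "hides G f H \<longleftrightarrow> subgroup H G \<and>
     (\<forall>g1\<in>carrier G. \<forall>g2\<in>carrier G. f g1 = f g2 \<longleftrightarrow> g1 <#\<^bsub>G\<^esub> H = g2 <#\<^bsub>G\<^esub> H)"

text \<open>Deterministic adaptive query algorithms (decision trees): either qoutput a
  result, or query an element g and continue depending on the answer f g.\<close>
datatype ('g, 'x, 'r) qalg = Output 'r | Query 'g "'x \<Rightarrow> ('g, 'x, 'r) qalg"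

primrec exec :: "('g, 'x, 'r) qalg \<Rightarrow> ('g \<Rightarrow> 'x) \<Rightarrow> 'r \<times> 'g list" where
  "exec (Output r) f = (r, [])"
| "exec (Query g c) f = (case exec (c (f g)) f of (r, qs) \<Rightarrow> (r, g # qs))"

definition qoutput :: "('g, 'x, 'r) qalg \<Rightarrow> ('g \<Rightarrow> 'x) \<Rightarrow> 'r" where
  "qoutput A f = fst (exec A f)"

definition queries :: "('g, 'x, 'r) qalg \<Rightarrow> ('g \<Rightarrow> 'x) \<Rightarrow> 'g list" where
  "queries A f = snd (exec A f)"

end

theory Submission
  imports Defs
begin

text \<open>The subgroups of \<open>\<int>/p\<^sup>k\<close> form the chain \<open>p\<^sup>j\<int>/p\<^sup>k\<close>, \<open>j \<le> k\<close>, and a hiding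
  function satisfies \<open>f a = f 0 \<longleftrightarrow> a \<in> H\<close>. Hence \<open>H\<close> is trivial iff \<open>f (p\<^sup>k\<^sup>-\<^sup>1) \<noteq> f 0\<close>,
  and \<open>H = p\<^sup>j\<int>/p\<^sup>k\<close> for the least \<open>j\<close> with \<open>f (p\<^sup>j) = f 0\<close>; finding that \<open>j\<close> by
  querying \<open>0, p\<^sup>0, p\<^sup>1, \<dots>\<close> costs at most \<open>j + 2\<close> queries, and \<open>|G|/|H| = p\<^sup>j\<close>.\<close>

lemma Zmod_simps [simp]:
  "carrier (Zmod n) = {0..<n}" "mult (Zmod n) a b = (a + b) mod n" "one (Zmod n) = 0"
  by (simp_all add: Zmod_def)

lemma comm_group_Zmod:
  assumes "n > 0"
  shows "comm_group (Zmod n)"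
proof (rule comm_groupI)
  fix x assume "x \<in> carrier (Zmod n)"
  then show "\<exists>y \<in> carrier (Zmod n). y \<otimes>\<^bsub>Zmod n\<^esub> x = \<one>\<^bsub>Zmod n\<^esub>"
    using assms by (intro bexI[of _ "(n - x) mod n"]) (auto simp: mod_add_left_eq)
qed (use assms in \<open>auto simp: mod_add_left_eq mod_add_right_eq add_ac\<close>)

lemma (in group) l_coset_eq_one_iff:
  assumes "subgroup H G" "a \<in> carrier G"
  shows "a <# H = \<one> <# H \<longleftrightarrow> a \<in> H"
proof -
  have one_coset: "\<one> <# H = H"
    using lcos_mult_one subgroup.subset[OF assms(1)] .
  have "a \<in> a <# H"
    using assms subgroup.one_closed unfolding l_coset_def by force
  then show ?thesis
    using l_repr_independence[of a \<one> H] assms(1) one_coset by auto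
qed

lemma hides_eq_one_iff:
  assumes "group G" "hides G f H" "a \<in> carrier G"
  shows "f a = f \<one>\<^bsub>G\<^esub> \<longleftrightarrow> a \<in> H"
proof -
  interpret group G by fact
  show ?thesis using assms(2,3) l_coset_eq_one_iff unfolding hides_def by simp
qed

definition multiples :: "nat \<Rightarrow> nat \<Rightarrow> nat set" where
  "multiples n m = {x. x < n \<and> m dvd x}"

lemma card_multiples:
  assumes "m dvd n" "m > 0"
  shows "card (multiples n m) = n div m"
proof -
  have bound: "m * c < n \<longleftrightarrow> c < n div m" for c
    using assms by (metis dvd_mult_div_cancel mult_less_cancel1)
  have "multiples n m = (\<lambda>c. m * c) ` {..<n div m}"
  proof (intro equalityI subsetI)
    fix x assume "x \<in> multiples n m"
    then obtain c where "x = m * c" "m * c < n" by (auto simp: multiples_def)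
    then show "x \<in> (\<lambda>c. m * c) ` {..<n div m}" using bound by blast
  qed (auto simp: multiples_def bound)
  moreover have "inj_on (\<lambda>c. m * c) {..<n div m}"
    using assms(2) by (auto simp: inj_on_def)
  ultimately show ?thesis by (simp add: card_image)
qed

lemma multiples_eq_zero_iff:
  assumes "m dvd n" "n > 0"
  shows "multiples n m = {0} \<longleftrightarrow> m = n"
proof
  assume trivial: "multiples n m = {0}"
  have "m \<noteq> 0" "m \<le> n" using assms by (auto dest: dvd_imp_le)
  moreover have "m \<notin> multiples n m" using trivial \<open>m \<noteq> 0\<close> by simp
  ultimately show "m = n" by (simp add: multiples_def)
next
  assume "m = n"
  then show "multiples n m = {0}"
    using assms(2) by (auto simp: multiples_def dest: nat_dvd_not_less)
qed

lemma Zmod_subgroup_modulus_pos: "subgroup H (Zmod n) \<Longrightarrow> n > 0"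
  using subgroup.one_closed subgroup.subset by fastforce

text \<open>Via \<open>a mod n \<in> H\<close>, a subgroup becomes a set of naturals closed under truncated
  subtraction and hence under \<open>mod\<close>, so it consists of the multiples of its least positive
  element, as for ideals of \<open>\<int>\<close>.\<close>

lemma Zmod_subgroup_mult_mod:
  assumes "subgroup H (Zmod n)" "a mod n \<in> H"
  shows "(c * a) mod n \<in> H"
proof (induction c)
  case 0
  show ?case using subgroup.one_closed[OF assms(1)] by simp
next
  case (Suc c)
  then have "(a mod n + (c * a) mod n) mod n \<in> H"
    using subgroup.m_closed[OF assms(1) assms(2)] by simp
  then show ?case by (simp add: mod_add_eq)
qed

lemma Zmod_subgroup_diff_mod:
  assumes H: "subgroup H (Zmod n)" and "a mod n \<in> H" "b mod n \<in> H" "b \<le> a"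
  shows "(a - b) mod n \<in> H"
proof -
  have "n > 0" using Zmod_subgroup_modulus_pos[OF H] .
  then have "a + (n - 1) * b = (a - b) + n * b"
    using \<open>b \<le> a\<close> by (cases n) auto
  then have "(a - b) mod n = (a mod n + ((n - 1) * b) mod n) mod n"
    by (metis mod_add_eq mod_mult_self2)
  then show ?thesis
    using subgroup.m_closed[OF H] assms(2) Zmod_subgroup_mult_mod[OF H assms(3)] by simp
qed

lemma Zmod_subgroup_mod_mod:
  assumes H: "subgroup H (Zmod n)" and "a mod n \<in> H" "b mod n \<in> H"
  shows "(a mod b) mod n \<in> H"
proof -
  have "(a div b * b) mod n \<in> H" using Zmod_subgroup_mult_mod[OF H assms(3)] .
  with Zmod_subgroup_diff_mod[OF H assms(2)] show ?thesis
    by (metis div_times_less_eq_dividend minus_div_mult_eq_mod)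
qed

theorem Zmod_subgroup_eq_multiples:
  assumes H: "subgroup H (Zmod n)"
  obtains m where "m dvd n" "H = multiples n m"
proof -
  have "n > 0" using Zmod_subgroup_modulus_pos[OF H] .
  define m where "m = (LEAST m. 0 < m \<and> m mod n \<in> H)"
  have n_ok: "0 < n \<and> n mod n \<in> H" using \<open>n > 0\<close> subgroup.one_closed[OF H] by simp
  have "0 < m \<and> m mod n \<in> H"
    unfolding m_def using n_ok by (rule LeastI)
  then have m: "0 < m" "m mod n \<in> H" by simp_all
  have dvd_if_mem: "m dvd x" if "x mod n \<in> H" for x
  proof (rule ccontr)
    assume "\<not> m dvd x"
    then have "0 < x mod m \<and> x mod m mod n \<in> H"
      using Zmod_subgroup_mod_mod[OF H that m(2)] by (simp add: dvd_eq_mod_eq_0)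
    then have "m \<le> x mod m" unfolding m_def by (rule Least_le)
    with mod_less_divisor[OF m(1), of x] show False by simp
  qed
  have "m dvd n" using dvd_if_mem n_ok by blast
  moreover have "H = multiples n m"
  proof
    show "H \<subseteq> multiples n m"
      using subgroup.subset[OF H] dvd_if_mem by (force simp: multiples_def)
    show "multiples n m \<subseteq> H"
    proof
      fix x assume "x \<in> multiples n m"
      then have "x = x div m * m" "x < n" by (simp_all add: multiples_def)
      then show "x \<in> H" using Zmod_subgroup_mult_mod[OF H m(2), of "x div m"] by simp
    qed
  qed
  ultimately show ?thesis using that by blast
qed

lemma hides_Zmod_prime_power:
  assumes p: "prime p" and hides: "hides (Zmod (p ^ k)) f H"
  obtains j where "j \<le> k" "H = multiples (p ^ k) (p ^ j)"
    "\<And>a. a < p ^ k \<Longrightarrow> f a = f 0 \<longleftrightarrow> p ^ j dvd a"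
proof -
  have pos: "p ^ k > 0" using p by (simp add: prime_gt_0_nat)
  obtain m where "m dvd p ^ k" and H: "H = multiples (p ^ k) m"
    using hides Zmod_subgroup_eq_multiples unfolding hides_def by blast
  then obtain j where "j \<le> k" "m = p ^ j" using divides_primepow_nat[OF p] by blast
  moreover have "f a = f 0 \<longleftrightarrow> p ^ j dvd a" if "a < p ^ k" for a
    using hides_eq_one_iff[OF comm_group.axioms(2)[OF comm_group_Zmod[OF pos]] hides] that
    by (simp add: H \<open>m = p ^ j\<close> multiples_def)
  ultimately show ?thesis using that H by blast
qed

lemma qoutput_Output [simp]: "qoutput (Output r) f = r"
  and queries_Output [simp]: "queries (Output r) f = []"
  and qoutput_Query [simp]: "qoutput (Query g c) f = qoutput (c (f g)) f"
  and queries_Query [simp]: "queries (Query g c) f = g # queries (c (f g)) f"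
  by (simp_all add: qoutput_def queries_def split: prod.split)

text \<open>\<open>p\<^sup>k\<^sup>-\<^sup>1\<close> lies in every nontrivial subgroup of \<open>\<int>/p\<^sup>k\<close>.\<close>

definition decide_trivial :: "nat \<Rightarrow> nat \<Rightarrow> (nat, 'x, bool) qalg" where
  "decide_trivial p k = Query 0 (\<lambda>y0. Query (p ^ (k - 1)) (\<lambda>y. Output (y \<noteq> y0)))"

lemma decide_trivial_correct:
  assumes p: "prime p" and "k \<ge> 1" and hides: "hides (Zmod (p ^ k)) f H"
  shows "set (queries (decide_trivial p k) f) \<subseteq> carrier (Zmod (p ^ k))
    \<and> length (queries (decide_trivial p k) f) = 2
    \<and> (qoutput (decide_trivial p k) f \<longleftrightarrow> H = {\<one>\<^bsub>Zmod (p ^ k)\<^esub>})"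
proof -
  obtain j where j: "j \<le> k" "H = multiples (p ^ k) (p ^ j)"
    and same_value: "\<And>a. a < p ^ k \<Longrightarrow> f a = f 0 \<longleftrightarrow> p ^ j dvd a"
    using hides_Zmod_prime_power[OF p hides] by blast
  have p2: "2 \<le> p" using prime_ge_2_nat[OF p] .
  have below: "p ^ (k - 1) < p ^ k" using p2 \<open>k \<ge> 1\<close> by simp
  have "f (p ^ (k - 1)) \<noteq> f 0 \<longleftrightarrow> j = k"
    using same_value[OF below] dvd_power_iff_le[OF p2] j(1) \<open>k \<ge> 1\<close> by auto
  moreover have "H = {0} \<longleftrightarrow> j = k"
    using j multiples_eq_zero_iff[of "p ^ j" "p ^ k"] p2 by (simp add: le_imp_power_dvd)
  ultimately show ?thesis using below p2 by (simp add: decide_trivial_def)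
qed

primrec climb :: "nat \<Rightarrow> nat \<Rightarrow> nat \<Rightarrow> nat \<Rightarrow> 'x \<Rightarrow> (nat, 'x, nat set) qalg" where
  "climb p k 0 i y0 = Output {0}"
| "climb p k (Suc r) i y0 = Query (p ^ i) (\<lambda>y.
     if y = y0 then Output (multiples (p ^ k) (p ^ i)) else climb p k r (Suc i) y0)"

lemma climb_correct:
  assumes p2: "2 \<le> p" and "j \<le> k"
    and same_value: "\<And>a. a < p ^ k \<Longrightarrow> f a = y0 \<longleftrightarrow> p ^ j dvd a"
  shows "i \<le> j \<Longrightarrow> i + r = k \<Longrightarrow>
    qoutput (climb p k r i y0) f = multiples (p ^ k) (p ^ j)
    \<and> set (queries (climb p k r i y0) f) \<subseteq> {..<p ^ k}
    \<and> length (queries (climb p k r i y0) f) \<le> Suc j - i"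
proof (induction r arbitrary: i)
  case 0
  then show ?case
    using \<open>j \<le> k\<close> p2 multiples_eq_zero_iff[of "p ^ k" "p ^ k"] by simp
next
  case (Suc r)
  then have below: "p ^ i < p ^ k" using p2 by simp
  have hit: "f (p ^ i) = y0 \<longleftrightarrow> i = j"
    using same_value[OF below] dvd_power_iff_le[OF p2] Suc.prems(1) by auto
  show ?case
  proof (cases "i = j")
    case True
    then show ?thesis using hit below by simp
  next
    case False
    then have "Suc i \<le> j" "Suc i + r = k" using Suc.prems by auto
    then show ?thesis using Suc.IH hit below False by auto
  qed
qed

definition identify_subgroup :: "nat \<Rightarrow> nat \<Rightarrow> (nat, 'x, nat set) qalg" where
  "identify_subgroup p k = Query 0 (climb p k k 0)"

lemma identify_subgroup_correct:
  assumes p: "prime p" and hides: "hides (Zmod (p ^ k)) f H"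
  shows "set (queries (identify_subgroup p k) f) \<subseteq> carrier (Zmod (p ^ k))
    \<and> real (length (queries (identify_subgroup p k) f))
        \<le> 2 + log (real p) (real (card (carrier (Zmod (p ^ k)))) / real (card H))
    \<and> qoutput (identify_subgroup p k) f = H"
proof -
  obtain j where j: "j \<le> k" "H = multiples (p ^ k) (p ^ j)"
    and same_value: "\<And>a. a < p ^ k \<Longrightarrow> f a = f 0 \<longleftrightarrow> p ^ j dvd a"
    using hides_Zmod_prime_power[OF p hides] by blast
  have p2: "2 \<le> p" using prime_ge_2_nat[OF p] .
  have "card H = p ^ (k - j)"
    using j card_multiples[of "p ^ j" "p ^ k"] p2 by (simp add: le_imp_power_dvd power_diff)
  moreover have "p ^ k = p ^ j * p ^ (k - j)"
    using j(1) by (simp flip: power_add)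
  ultimately have "real (card (carrier (Zmod (p ^ k)))) / real (card H) = real p ^ j"
    using p2 by simp
  then have "log (real p) (real (card (carrier (Zmod (p ^ k)))) / real (card H)) = j"
    using p2 by simp
  then show ?thesis
    using climb_correct[OF p2 j(1) same_value, of 0 k] p2
    by (auto simp: identify_subgroup_def j(2))
qed

theorem theorem1:
  fixes p k :: nat
  assumes "prime p" and "k \<ge> 1"
  shows
    "(\<exists>A :: (nat, 'x, bool) qalg.
        \<forall>(X :: 'x set) f H. finite X \<and> f \<in> carrier (Zmod (p ^ k)) \<rightarrow> X
            \<and> hides (Zmod (p ^ k)) f H \<longrightarrow>
          set (queries A f) \<subseteq> carrier (Zmod (p ^ k))
          \<and> length (queries A f) = 2
          \<and> (qoutput A f \<longleftrightarrow> H = {\<one>\<^bsub>Zmod (p ^ k)\<^esub>}))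
     \<and>
     (\<exists>A :: (nat, 'x, nat set) qalg.
        \<forall>(X :: 'x set) f H. finite X \<and> f \<in> carrier (Zmod (p ^ k)) \<rightarrow> X
            \<and> hides (Zmod (p ^ k)) f H \<longrightarrow>
          set (queries A f) \<subseteq> carrier (Zmod (p ^ k))
          \<and> real (length (queries A f))
              \<le> 2 + log (real p) (real (card (carrier (Zmod (p ^ k)))) / real (card H))
          \<and> qoutput A f = H)"
  by (rule conjI; intro exI allI impI; elim conjE;
      rule decide_trivial_correct[OF assms] identify_subgroup_correct[OF assms(1)])

end
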